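(* Let $k\ge 3$ be odd and let $G$ be a $k$-uniform hyperpath of length $r\ge 3$, with Laplacian tensor $\mathcal L$. Then $\lambda(\mathcal L)=2$.
   Context: A $k$-uniform hyperpath of length $d$ has vertex set $\{i_{1,1},\ldots,i_{1,k}\}\cup\{i_{j,s}: 2\le j\le d,\ 2\le s\le k\}$ (all distinct) and edges $\{i_{1,1},\ldots,i_{1,k}\}$ and $\{i_{j-1,k},i_{j,2},\ldots,i_{j,k}\}$ for $2\le j\le d$. For a $k$-uniform hypergraph $G=(V,E)$ with $V=[n]$ and $d_i$ the number of edges containing $i$, the Laplacian tensor $\mathcal L=\mathcal D-\mathcal A$ ($\mathcal D$ diagonal with entries $d_i$, $\mathcal A$ with entries $\frac1{(k-1)!}$ at index tuples forming an edge and $0$ otherwise) satisfies $(\mathcal L\mathbf x^{k-1})_i=d_ix_i^{k-1}-\sum_{e\in E,\,i\in e}\prod_{s\in e\setminus\{i\}}x_s$. A real $\lambda$ is an H-eigenvalue of $\mathcal L$ if some nonzero $\mathbf x\in\mathbb R^n$ satisfies $(\mathcal L\mathbf x^{k-1})_i=\lambda x_i^{k-1}$ for all $i$; $\lambda(\mathcal L)$ is the largest H-eigenvalue. *)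

theory Defs
  imports "HOL-Analysis.Analysis"
begin

text \<open>A k-uniform hypergraph is given by a finite vertex set V and a set E of edges
(subsets of V of cardinality k).  The vertex names are arbitrary (any labelling by [n]
gives the same spectrum).\<close>

definition degree :: "'a set set \<Rightarrow> 'a \<Rightarrow> nat" where
  "degree E i = card {e \<in> E. i \<in> e}"

definition laplacian_apply :: "'a set set \<Rightarrow> nat \<Rightarrow> ('a \<Rightarrow> real) \<Rightarrow> 'a \<Rightarrow> real" where
  "laplacian_apply E k x i =
     real (degree E i) * x i ^ (k - 1) - (\<Sum>e\<in>{e \<in> E. i \<in> e}. \<Prod>s\<in>e - {i}. x s)"

definition is_H_eigenvalue :: "'a set \<Rightarrow> 'a set set \<Rightarrow> nat \<Rightarrow> real \<Rightarrow> bool" where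
  "is_H_eigenvalue V E k lam \<longleftrightarrow>
     (\<exists>x :: 'a \<Rightarrow> real. (\<exists>i\<in>V. x i \<noteq> 0) \<and>
        (\<forall>i\<in>V. laplacian_apply E k x i = lam * x i ^ (k - 1)))"

definition largest_H_eigenvalue :: "'a set \<Rightarrow> 'a set set \<Rightarrow> nat \<Rightarrow> real" where
  "largest_H_eigenvalue V E k = (GREATEST lam. is_H_eigenvalue V E k lam)"

text \<open>k-uniform hyperpath of length d: vertices i(j,s), with i(1,s) for 1<=s<=k and
i(j,s) for 2<=j<=d, 2<=s<=k all distinct; we set i(j,1) = i(j-1,k) for j>=2, so that
the edges are exactly {i(j,1),...,i(j,k)} for 1<=j<=d.\<close>
definition hyperpath_index_set :: "nat \<Rightarrow> nat \<Rightarrow> (nat \<times> nat) set" where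
  "hyperpath_index_set k d =
     {(1, s) | s. 1 \<le> s \<and> s \<le> k} \<union> {(j, s) | j s. 2 \<le> j \<and> j \<le> d \<and> 2 \<le> s \<and> s \<le> k}"

definition is_hyperpath :: "nat \<Rightarrow> nat \<Rightarrow> 'a set \<Rightarrow> 'a set set \<Rightarrow> bool" where
  "is_hyperpath k d V E \<longleftrightarrow>
     (\<exists>f :: nat \<Rightarrow> nat \<Rightarrow> 'a.
        inj_on (\<lambda>(j, s). f j s) (hyperpath_index_set k d) \<and>
        (\<forall>j. 2 \<le> j \<and> j \<le> d \<longrightarrow> f j 1 = f (j - 1) k) \<and>
        V = (\<lambda>(j, s). f j s) ` hyperpath_index_set k d \<and>
        E = {f j ` {1..k} | j. 1 \<le> j \<and> j \<le> d})"

end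

theory Submission
  imports Defs
begin

text \<open>
  Let x be an H-eigenvector for \<lambda>. Write y 0 and y r for its values at the two free end vertices,
  y j (0 < j < r) for its value at the vertex shared by edges j and j + 1, and P j for the product
  of its values over edge j. Multiplying the eigenequation at a vertex by the value there gives
  (1 - \<lambda>) x^k = P j at the vertices of degree one and (2 - \<lambda>) (y j)^k = P j + P (j + 1) at the
  junctions. As k is odd, all interior vertices of edge j carry a common value c j, whence
  P j = y (j - 1) * y j * (c j)^(k - 2). For \<lambda> > 2 this makes y (j - 1) * y j \<le> 0 whenever P j \<noteq> 0, and
  since k + 1 is even the inequality y (j - 1) * P j \<le> 0 propagates from the left end to the right
  end, where it can only hold with equality; going back, everything vanishes. Conversely, the
  indicator vector of a junction vertex is an eigenvector for 2, because every edge has at least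
  three vertices.
\<close>

lemma edge_sign_flip:
  fixes u v q c lam :: real
  assumes "1 < lam" and "(1 - lam) * c\<^sup>2 * q = u * v * q" and "u * (u * v * q) \<le> 0"
  shows "v * (u * v * q) \<ge> 0"
proof (cases "q = 0 \<or> u = 0")
  case True
  then show ?thesis by auto
next
  case False
  then have "u * v = (1 - lam) * c\<^sup>2" using assms(2) by simp
  then have uv: "u * v \<le> 0" using assms(1) by (simp add: mult_nonpos_nonneg)
  have "u\<^sup>2 * (v * q) \<le> 0" using assms(3) by (simp add: power2_eq_square algebra_simps)
  then have "v * q \<le> 0" using False by (simp add: mult_le_0_iff)
  then have "0 \<le> (u * v) * (v * q)" using uv by (simp add: mult_nonpos_nonpos)
  then show ?thesis by (simp add: mult_ac)
qed

lemma odd_power_scaled_nonpos: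
  fixes t x :: real
  assumes "odd k" and "t \<le> 0"
  shows "x * (t * x ^ k) \<le> 0"
proof -
  have "0 \<le> x ^ Suc k" using \<open>odd k\<close> by (simp add: zero_le_even_power del: power_Suc)
  then have "t * x ^ Suc k \<le> 0" using \<open>t \<le> 0\<close> by (simp add: mult_nonpos_nonneg del: power_Suc)
  then show ?thesis by (simp add: mult.left_commute)
qed

lemma odd_power_zero_if_scaled_nonneg:
  fixes t x :: real
  assumes "odd k" and "t < 0" and "0 \<le> x * (t * x ^ k)"
  shows "x = 0"
proof -
  have "0 \<le> x ^ Suc k" using \<open>odd k\<close> by (simp add: zero_le_even_power del: power_Suc)
  moreover have "0 \<le> t * x ^ Suc k" using assms(3) by (simp add: mult.left_commute)
  then have "x ^ Suc k \<le> 0" using assms(2) by (simp add: zero_le_mult_iff del: power_Suc)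
  ultimately have "x ^ Suc k = 0" by simp
  then show ?thesis by auto
qed

lemma hyperpath_chain_vanishes:
  fixes y c :: "nat \<Rightarrow> real" and lam :: real and k r :: nat
  defines "P \<equiv> \<lambda>j. y (j - 1) * y j * c j ^ (k - 2)"
  assumes "odd k" and "3 \<le> k" and "2 < lam" and "1 \<le> r"
    and interior: "\<And>j. 1 \<le> j \<Longrightarrow> j \<le> r \<Longrightarrow> (1 - lam) * c j ^ k = P j"
    and left_end: "(1 - lam) * y 0 ^ k = P 1"
    and right_end: "(1 - lam) * y r ^ k = P r"
    and junction: "\<And>j. 1 \<le> j \<Longrightarrow> j < r \<Longrightarrow> (2 - lam) * y j ^ k = P j + P (Suc j)"
  shows "\<And>j. j \<le> r \<Longrightarrow> y j = 0" and "\<And>j. 1 \<le> j \<Longrightarrow> j \<le> r \<Longrightarrow> c j = 0"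
proof -
  have sign_flip: "0 \<le> y j * P j" if "1 \<le> j" "j \<le> r" "y (j - 1) * P j \<le> 0" for j
  proof -
    have "2 + (k - 2) = k" using \<open>3 \<le> k\<close> by simp
    then have "c j ^ k = (c j)\<^sup>2 * c j ^ (k - 2)" by (metis power_add)
    then show ?thesis
      using edge_sign_flip[of lam "c j" "c j ^ (k - 2)" "y (j - 1)" "y j"] interior[OF that(1,2)] that(3)
        \<open>2 < lam\<close> unfolding P_def by simp
  qed
  have sign_propagates: "y (j - 1) * P j \<le> 0" if "1 \<le> j" "j \<le> r" for j
    using that
  proof (induction j rule: dec_induct)
    case base
    show ?case
      using odd_power_scaled_nonpos[OF \<open>odd k\<close>, of "1 - lam" "y 0"] \<open>2 < lam\<close> left_end by simp
  next
    case (step n)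
    have "y n * P (Suc n) = y n * ((2 - lam) * y n ^ k) - y n * P n"
      using junction[of n] step by (simp add: algebra_simps)
    moreover have "0 \<le> y n * P n" using sign_flip step by simp
    moreover have "y n * ((2 - lam) * y n ^ k) \<le> 0"
      using odd_power_scaled_nonpos \<open>odd k\<close> \<open>2 < lam\<close> by simp
    ultimately show ?case by simp
  qed
  have y_vanishes: "y j = 0" if "1 \<le> j" "j \<le> r" for j
    using that(2,1)
  proof (induction j rule: inc_induct)
    case base
    have "0 \<le> y r * ((1 - lam) * y r ^ k)"
      using sign_flip[OF \<open>1 \<le> r\<close> order.refl sign_propagates[OF \<open>1 \<le> r\<close> order.refl]] right_end by simp
    then show ?case using \<open>2 < lam\<close> by (intro odd_power_zero_if_scaled_nonneg[OF \<open>odd k\<close>]) auto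
  next
    case (step n)
    have "P (Suc n) = 0" using step unfolding P_def by simp
    then have "0 \<le> y n * ((2 - lam) * y n ^ k)"
      using junction[of n] sign_flip[of n] sign_propagates[of n] step by simp
    then show ?case using \<open>2 < lam\<close> by (intro odd_power_zero_if_scaled_nonneg[OF \<open>odd k\<close>]) auto
  qed
  have edge_zero: "P j = 0" if "1 \<le> j" "j \<le> r" for j
    using y_vanishes[OF that] unfolding P_def by simp
  show "y j = 0" if "j \<le> r" for j
  proof (cases "j = 0")
    case True
    then show ?thesis using left_end edge_zero[OF order.refl \<open>1 \<le> r\<close>] \<open>2 < lam\<close> by simp
  qed (use y_vanishes that in simp)
  show "c j = 0" if "1 \<le> j" "j \<le> r" for j
    using interior[OF that] edge_zero[OF that] \<open>2 < lam\<close> by simp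
qed

lemma laplacian_apply_mult_self:
  assumes "\<And>e. e \<in> E \<Longrightarrow> finite e" and "1 \<le> k"
  shows "x v * laplacian_apply E k x v =
    real (degree E v) * x v ^ k - (\<Sum>e\<in>{e \<in> E. v \<in> e}. \<Prod>s\<in>e. x s)"
proof -
  have "x v * (\<Prod>s\<in>e - {v}. x s) = (\<Prod>s\<in>e. x s)" if "e \<in> {e \<in> E. v \<in> e}" for e
    using that assms(1) prod.remove[of e v x] by simp
  then have "x v * (\<Sum>e\<in>{e \<in> E. v \<in> e}. \<Prod>s\<in>e - {v}. x s) = (\<Sum>e\<in>{e \<in> E. v \<in> e}. \<Prod>s\<in>e. x s)"
    by (simp add: sum_distrib_left)
  moreover have "x v * x v ^ (k - 1) = x v ^ k"
    using \<open>1 \<le> k\<close> by (simp flip: power_Suc)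
  ultimately show ?thesis
    unfolding laplacian_apply_def by (simp add: right_diff_distrib mult.left_commute)
qed

lemma is_H_eigenvalue_degree:
  assumes "c \<in> V" and "2 \<le> k" and "\<And>e. e \<in> E \<Longrightarrow> 3 \<le> card e"
  shows "is_H_eigenvalue V E k (degree E c)"
proof -
  define x :: "'a \<Rightarrow> real" where "x v = (if v = c then 1 else 0)" for v
  have "(\<Prod>s\<in>e - {v}. x s) = 0" if "e \<in> E" for e v
  proof -
    have "\<not> e \<subseteq> {v, c}"
    proof
      assume "e \<subseteq> {v, c}"
      then have "card e \<le> card {v, c}" by (intro card_mono) auto
      also have "\<dots> \<le> 2" by (simp add: card_insert_if)
      finally show False using assms(3)[OF that] by simp
    qed
    then obtain w where "w \<in> e - {v}" and "w \<noteq> c" by blast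
    then have "x w = 0" by (simp add: x_def)
    moreover have "finite e" using assms(3)[OF that] by (intro card_ge_0_finite) simp
    ultimately show ?thesis using \<open>w \<in> e - {v}\<close> by (intro prod_zero) auto
  qed
  then have "laplacian_apply E k x v = real (degree E v) * x v ^ (k - 1)" for v
    unfolding laplacian_apply_def by simp
  then have "\<forall>v\<in>V. laplacian_apply E k x v = real (degree E c) * x v ^ (k - 1)"
    using \<open>2 \<le> k\<close> by (simp add: x_def)
  moreover have "x c \<noteq> 0" by (simp add: x_def)
  ultimately show ?thesis unfolding is_H_eigenvalue_def using \<open>c \<in> V\<close> by blast
qed

locale hyperpath =
  fixes f :: "nat \<Rightarrow> nat \<Rightarrow> 'a" and k r :: nat
  assumes k_ge_3: "3 \<le> k" and r_pos: "1 \<le> r"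
    and inj: "inj_on (\<lambda>(j, s). f j s) (hyperpath_index_set k r)"
    and glue: "\<And>j. 2 \<le> j \<Longrightarrow> j \<le> r \<Longrightarrow> f j 1 = f (j - 1) k"
begin

definition edge :: "nat \<Rightarrow> 'a set" where
  "edge j = f j ` {1..k}"

definition edges :: "'a set set" where
  "edges = {edge j | j. 1 \<le> j \<and> j \<le> r}"

definition vertices :: "'a set" where
  "vertices = (\<lambda>(j, s). f j s) ` hyperpath_index_set k r"

lemma index_set_iff:
  "(a, b) \<in> hyperpath_index_set k r \<longleftrightarrow>
     (a = 1 \<and> 1 \<le> b \<and> b \<le> k) \<or> (2 \<le> a \<and> a \<le> r \<and> 2 \<le> b \<and> b \<le> k)"
  by (auto simp: hyperpath_index_set_def)

lemma row_in_index_set: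
  "1 \<le> j \<Longrightarrow> j \<le> r \<Longrightarrow> 2 \<le> s \<Longrightarrow> s \<le> k \<Longrightarrow> (j, s) \<in> hyperpath_index_set k r"
  unfolding index_set_iff by linarith

lemma f_eq_iff:
  assumes "(a, b) \<in> hyperpath_index_set k r" and "(c, d) \<in> hyperpath_index_set k r"
  shows "f a b = f c d \<longleftrightarrow> a = c \<and> b = d"
  using inj_on_eq_iff[OF inj assms] by simp

lemma f_row_eq_iff:
  assumes ab: "(a, b) \<in> hyperpath_index_set k r" and "1 \<le> j" "j \<le> r" "1 \<le> s" "s \<le> k"
  shows "f j s = f a b \<longleftrightarrow>
    (a = j \<and> b = s \<and> (j = 1 \<or> 2 \<le> s)) \<or> (s = 1 \<and> 2 \<le> j \<and> a = j - 1 \<and> b = k)"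
proof (cases "s = 1 \<and> 2 \<le> j")
  case True
  then have "(j - 1, k) \<in> hyperpath_index_set k r"
    using \<open>j \<le> r\<close> k_ge_3 unfolding index_set_iff by linarith
  then show ?thesis
    using True glue[of j] f_eq_iff[OF _ ab, of "j - 1" k] \<open>j \<le> r\<close> by auto
next
  case False
  then have "(j, s) \<in> hyperpath_index_set k r"
    using assms unfolding index_set_iff by linarith
  then show ?thesis
    using False f_eq_iff[OF _ ab, of j s] assms(2,4) by auto
qed

lemma mem_edge_iff:
  assumes ab: "(a, b) \<in> hyperpath_index_set k r" and "1 \<le> j" and "j \<le> r"
  shows "f a b \<in> edge j \<longleftrightarrow>
    (a = j \<and> 2 \<le> b) \<or> (j = 1 \<and> a = 1 \<and> b = 1) \<or> (2 \<le> j \<and> a = j - 1 \<and> b = k)"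
    (is "_ \<longleftrightarrow> ?rhs")
proof -
  have "f a b \<in> edge j \<longleftrightarrow> (\<exists>s\<in>{1..k}. f j s = f a b)"
    unfolding edge_def by (metis image_iff)
  also have "\<dots> \<longleftrightarrow>
      (\<exists>s\<in>{1..k}. (a = j \<and> b = s \<and> (j = 1 \<or> 2 \<le> s)) \<or> (s = 1 \<and> 2 \<le> j \<and> a = j - 1 \<and> b = k))"
    using f_row_eq_iff[OF assms] by (intro bex_cong refl) simp
  also have "\<dots> \<longleftrightarrow> ?rhs"
    using ab k_ge_3 unfolding index_set_iff by auto
  finally show ?thesis .
qed

lemma edge_inj_on: "inj_on edge {1..r}"
proof (rule inj_onI)
  fix i i' assume i: "i \<in> {1..r}" and i': "i' \<in> {1..r}" and "edge i = edge i'"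
  have i2: "(i, 2) \<in> hyperpath_index_set k r" using i k_ge_3 by (intro row_in_index_set) auto
  then have "f i 2 \<in> edge i'" using mem_edge_iff[OF i2] i \<open>edge i = edge i'\<close> by auto
  then show "i = i'" using mem_edge_iff[OF i2] i' k_ge_3 by auto
qed

lemma inj_on_row:
  assumes "1 \<le> j" "j \<le> r"
  shows "inj_on (f j) {1..k}"
proof (rule inj_onI)
  fix s s' assume s: "s \<in> {1..k}" and s': "s' \<in> {1..k}" and "f j s = f j s'"
  define a where "a = (if s' = 1 \<and> 2 \<le> j then j - 1 else j)"
  define b where "b = (if s' = 1 \<and> 2 \<le> j then k else s')"
  have ab: "(a, b) \<in> hyperpath_index_set k r"
    using assms s' k_ge_3 unfolding a_def b_def index_set_iff by auto
  have "f j s' = f a b" using f_row_eq_iff[OF ab assms] assms s' by (auto simp: a_def b_def)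
  then show "s = s'"
    using f_row_eq_iff[OF ab assms] assms s s' \<open>f j s = f j s'\<close> by (auto simp: a_def b_def split: if_splits)
qed

lemma card_edge: "1 \<le> j \<Longrightarrow> j \<le> r \<Longrightarrow> card (edge j) = k"
  unfolding edge_def using card_image[OF inj_on_row] by simp

lemma prod_edge: "1 \<le> j \<Longrightarrow> j \<le> r \<Longrightarrow> (\<Prod>v\<in>edge j. x v) = (\<Prod>s\<in>{1..k}. x (f j s))"
  unfolding edge_def using prod.reindex[OF inj_on_row] by simp

lemma edges_containing: "{e \<in> edges. v \<in> e} = edge ` {j \<in> {1..r}. v \<in> edge j}"
  unfolding edges_def by auto

lemma edges_at_interior:
  assumes "1 \<le> j" "j \<le> r" "2 \<le> s" "s < k"
  shows "{i \<in> {1..r}. f j s \<in> edge i} = {j}"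
  using mem_edge_iff[OF row_in_index_set] assms by auto

lemma edges_at_first: "{i \<in> {1..r}. f 1 1 \<in> edge i} = {1}"
proof -
  have "(1, 1) \<in> hyperpath_index_set k r" using k_ge_3 by (simp add: index_set_iff)
  then show ?thesis using mem_edge_iff[of 1 1] r_pos k_ge_3 by auto
qed

lemma edges_at_last: "{i \<in> {1..r}. f r k \<in> edge i} = {r}"
  using mem_edge_iff[OF row_in_index_set[OF r_pos order.refl]] r_pos k_ge_3 by auto

lemma edges_at_junction:
  assumes "1 \<le> j" "j < r"
  shows "{i \<in> {1..r}. f j k \<in> edge i} = {j, Suc j}"
  using mem_edge_iff[OF row_in_index_set] assms k_ge_3 by auto

definition boundary_vertex :: "nat \<Rightarrow> 'a" where
  "boundary_vertex j = (if j = 0 then f 1 1 else f j k)"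

lemma first_vertex_of_edge: "1 \<le> j \<Longrightarrow> j \<le> r \<Longrightarrow> f j 1 = boundary_vertex (j - 1)"
  using glue[of j] by (auto simp: boundary_vertex_def)

lemma vertices_cases:
  assumes "v \<in> vertices"
  obtains j where "j \<le> r" and "v = boundary_vertex j"
  | j s where "1 \<le> j" "j \<le> r" "2 \<le> s" "s < k" and "v = f j s"
proof -
  obtain a b where ab: "(a, b) \<in> hyperpath_index_set k r" and v: "v = f a b"
    using assms unfolding vertices_def by auto
  then consider "a = 1" "b = 1" | "1 \<le> a" "a \<le> r" "b = k" | "1 \<le> a" "a \<le> r" "2 \<le> b" "b < k"
    using r_pos unfolding index_set_iff by fastforce
  then show ?thesis
  proof cases
    case 1
    then show ?thesis using that(1)[of 0] v r_pos by (simp add: boundary_vertex_def)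
  next
    case 2
    then show ?thesis using that(1)[of a] v by (simp add: boundary_vertex_def)
  qed (use that(2) v in blast)
qed

definition edge_product :: "('a \<Rightarrow> real) \<Rightarrow> nat \<Rightarrow> real" where
  "edge_product x j = (\<Prod>s\<in>{1..k}. x (f j s))"

lemma degree_eq_card:
  "degree edges v = card {j \<in> {1..r}. v \<in> edge j}"
  unfolding degree_def edges_containing
  by (rule card_image) (rule inj_on_subset[OF edge_inj_on], auto)

context
  fixes x :: "'a \<Rightarrow> real" and lam :: real
  assumes eigen: "\<forall>v\<in>vertices. laplacian_apply edges k x v = lam * x v ^ (k - 1)"
begin

lemma eigen_equation_at:
  assumes ab: "(a, b) \<in> hyperpath_index_set k r"
  shows "real (card {j \<in> {1..r}. f a b \<in> edge j}) * x (f a b) ^ k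
    - (\<Sum>j\<in>{j \<in> {1..r}. f a b \<in> edge j}. edge_product x j) = lam * x (f a b) ^ k"
    (is "real (card ?J) * _ - _ = _")
proof -
  have "f a b \<in> vertices" using ab unfolding vertices_def by force
  then have "x (f a b) * laplacian_apply edges k x (f a b) = lam * (x (f a b) * x (f a b) ^ (k - 1))"
    using eigen by simp
  also have "x (f a b) * x (f a b) ^ (k - 1) = x (f a b) ^ k"
    using k_ge_3 by (simp flip: power_Suc)
  finally have "x (f a b) * laplacian_apply edges k x (f a b) = lam * x (f a b) ^ k" .
  moreover have "(\<Sum>e\<in>{e \<in> edges. f a b \<in> e}. \<Prod>v\<in>e. x v) = (\<Sum>j\<in>?J. edge_product x j)"
    unfolding edges_containing
    by (subst sum.reindex) (auto intro: inj_on_subset[OF edge_inj_on] simp: prod_edge edge_product_def)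
  moreover have "\<And>e. e \<in> edges \<Longrightarrow> finite e" by (auto simp: edges_def edge_def)
  ultimately show ?thesis
    using laplacian_apply_mult_self[of edges k x "f a b"] k_ge_3 by (simp add: degree_eq_card)
qed

lemma interior_equation:
  assumes "1 \<le> j" "j \<le> r" "2 \<le> s" "s < k"
  shows "(1 - lam) * x (f j s) ^ k = edge_product x j"
proof -
  have "(j, s) \<in> hyperpath_index_set k r" using assms by (intro row_in_index_set) auto
  from eigen_equation_at[OF this] show ?thesis
    unfolding edges_at_interior[OF assms] by (simp add: algebra_simps)
qed

lemma first_equation: "(1 - lam) * x (boundary_vertex 0) ^ k = edge_product x 1"
proof -
  have "(1, 1) \<in> hyperpath_index_set k r" using k_ge_3 by (simp add: index_set_iff)
  from eigen_equation_at[OF this] show ?thesis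
    unfolding edges_at_first by (simp add: boundary_vertex_def algebra_simps)
qed

lemma last_equation: "(1 - lam) * x (boundary_vertex r) ^ k = edge_product x r"
proof -
  have "(r, k) \<in> hyperpath_index_set k r" using r_pos k_ge_3 by (intro row_in_index_set) auto
  from eigen_equation_at[OF this] show ?thesis
    unfolding edges_at_last using r_pos by (simp add: boundary_vertex_def algebra_simps)
qed

lemma junction_equation:
  assumes "1 \<le> j" "j < r"
  shows "(2 - lam) * x (boundary_vertex j) ^ k = edge_product x j + edge_product x (Suc j)"
proof -
  have "(j, k) \<in> hyperpath_index_set k r" using assms k_ge_3 by (intro row_in_index_set) auto
  from eigen_equation_at[OF this] show ?thesis
    unfolding edges_at_junction[OF assms] using assms by (simp add: boundary_vertex_def algebra_simps)
qed

lemma interior_values_equal: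
  assumes "odd k" and "lam \<noteq> 1" and "1 \<le> j" "j \<le> r" "2 \<le> s" "s < k"
  shows "x (f j s) = x (f j 2)"
proof -
  have "(1 - lam) * x (f j s) ^ k = (1 - lam) * x (f j 2) ^ k"
    using interior_equation[of j s] interior_equation[of j 2] assms k_ge_3 by simp
  then have "x (f j s) ^ k = x (f j 2) ^ k" using \<open>lam \<noteq> 1\<close> by simp
  then show ?thesis by (metis odd_real_root_power_cancel \<open>odd k\<close>)
qed

lemma edge_product_eq:
  assumes "odd k" and "lam \<noteq> 1" and "1 \<le> j" "j \<le> r"
  shows "edge_product x j = x (boundary_vertex (j - 1)) * x (boundary_vertex j) * x (f j 2) ^ (k - 2)"
proof -
  have "{1..k} = insert 1 (insert k {2..<k})" using k_ge_3 by auto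
  then have "edge_product x j = x (f j 1) * x (f j k) * (\<Prod>s\<in>{2..<k}. x (f j s))"
    using k_ge_3 by (simp add: edge_product_def)
  also have "(\<Prod>s\<in>{2..<k}. x (f j s)) = (\<Prod>s\<in>{2..<k}. x (f j 2))"
    by (rule prod.cong[OF refl], rule interior_values_equal[OF assms]) auto
  moreover have "f j 1 = boundary_vertex (j - 1)" using assms(3,4) by (rule first_vertex_of_edge)
  moreover have "f j k = boundary_vertex j" using assms(3) by (simp add: boundary_vertex_def)
  ultimately show ?thesis by simp
qed

lemma boundary_and_interior_values_vanish:
  assumes "odd k" and "2 < lam"
  shows "\<And>j. j \<le> r \<Longrightarrow> x (boundary_vertex j) = 0"
    and "\<And>j. 1 \<le> j \<Longrightarrow> j \<le> r \<Longrightarrow> x (f j 2) = 0"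
proof -
  have "lam \<noteq> 1" using \<open>2 < lam\<close> by simp
  note edge_product = edge_product_eq[OF \<open>odd k\<close> this]
  have interior: "(1 - lam) * x (f j 2) ^ k =
      x (boundary_vertex (j - 1)) * x (boundary_vertex j) * x (f j 2) ^ (k - 2)"
    if "1 \<le> j" "j \<le> r" for j
    using interior_equation[OF that, of 2] edge_product[OF that] k_ge_3 by simp
  have left_end: "(1 - lam) * x (boundary_vertex 0) ^ k =
      x (boundary_vertex (1 - 1)) * x (boundary_vertex 1) * x (f 1 2) ^ (k - 2)"
    using first_equation edge_product[OF order.refl r_pos] by simp
  have right_end: "(1 - lam) * x (boundary_vertex r) ^ k =
      x (boundary_vertex (r - 1)) * x (boundary_vertex r) * x (f r 2) ^ (k - 2)"
    using last_equation edge_product[OF r_pos order.refl] by simp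
  have junction: "(2 - lam) * x (boundary_vertex j) ^ k =
      x (boundary_vertex (j - 1)) * x (boundary_vertex j) * x (f j 2) ^ (k - 2) +
      x (boundary_vertex (Suc j - 1)) * x (boundary_vertex (Suc j)) * x (f (Suc j) 2) ^ (k - 2)"
    if "1 \<le> j" "j < r" for j
    using junction_equation[OF that] edge_product[of j] edge_product[of "Suc j"] that by simp
  note vanishes = hyperpath_chain_vanishes[OF \<open>odd k\<close> k_ge_3 \<open>2 < lam\<close> r_pos
      interior left_end right_end junction]
  show "\<And>j. j \<le> r \<Longrightarrow> x (boundary_vertex j) = 0" and "\<And>j. 1 \<le> j \<Longrightarrow> j \<le> r \<Longrightarrow> x (f j 2) = 0"
    using vanishes by simp_all
qed

end


lemma H_eigenvalue_le_2:
  assumes "odd k" and "is_H_eigenvalue vertices edges k lam"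
  shows "lam \<le> 2"
proof (rule ccontr)
  assume "\<not> lam \<le> 2"
  then have "2 < lam" by simp
  obtain x where nonzero: "\<exists>v\<in>vertices. x v \<noteq> 0"
    and eigen: "\<forall>v\<in>vertices. laplacian_apply edges k x v = lam * x v ^ (k - 1)"
    using assms(2) unfolding is_H_eigenvalue_def by blast
  note vanish = boundary_and_interior_values_vanish[OF eigen \<open>odd k\<close> \<open>2 < lam\<close>]
  have "x v = 0" if "v \<in> vertices" for v
    using that
  proof (cases rule: vertices_cases)
    case (2 j s)
    moreover have "lam \<noteq> 1" using \<open>2 < lam\<close> by simp
    ultimately have "x (f j s) = x (f j 2)"
      by (intro interior_values_equal[OF eigen \<open>odd k\<close>]) simp_all
    then show ?thesis using vanish(2) 2 by simp
  qed (use vanish(1) in simp)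
  then show False using nonzero by blast
qed

lemma two_is_H_eigenvalue:
  assumes "2 \<le> r"
  shows "is_H_eigenvalue vertices edges k 2"
proof -
  have junction: "(1, k) \<in> hyperpath_index_set k r" using k_ge_3 by (simp add: index_set_iff)
  have "degree edges (f 1 k) = 2"
    using edges_at_junction[of 1] assms by (simp add: degree_eq_card)
  moreover have "f 1 k \<in> vertices" using junction unfolding vertices_def by force
  moreover have "3 \<le> card e" if "e \<in> edges" for e
    using that card_edge k_ge_3 by (auto simp: edges_def)
  ultimately show ?thesis using is_H_eigenvalue_degree[of "f 1 k" vertices k edges] k_ge_3 by simp
qed

end

theorem proposition4p2:
  fixes V :: "'a set" and E :: "'a set set" and k r :: nat
  assumes "k \<ge> 3" and "odd k" and "r \<ge> 3"
    and "is_hyperpath k r V E"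
  shows "largest_H_eigenvalue V E k = 2"
proof -
  obtain f :: "nat \<Rightarrow> nat \<Rightarrow> 'a" where
    inj: "inj_on (\<lambda>(j, s). f j s) (hyperpath_index_set k r)"
    and glue: "\<forall>j. 2 \<le> j \<and> j \<le> r \<longrightarrow> f j 1 = f (j - 1) k"
    and V: "V = (\<lambda>(j, s). f j s) ` hyperpath_index_set k r"
    and E: "E = {f j ` {1..k} | j. 1 \<le> j \<and> j \<le> r}"
    using assms(4) unfolding is_hyperpath_def by blast
  interpret hyperpath f k r
    using inj glue assms(1,3) by unfold_locales auto
  have "V = vertices" and "E = edges"
    unfolding V E vertices_def edges_def edge_def by simp_all
  then show ?thesis
    unfolding largest_H_eigenvalue_def
    using two_is_H_eigenvalue H_eigenvalue_le_2 assms(2,3)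
    by (intro Greatest_equality) auto
qed

end
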